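(* Let $\mathsf{Prop}=\{p,\bar p\}$ and let $\mathsf{L}'$ be a monotone fragment of $\mathsf{LTL}(\mathsf{Prop})$ with $\mathbf{X}\in\mathsf{Op}'$ and $\mathbf{U}\notin\mathsf{Op}'$ (and containing at least one proposition). For every $n\in\mathbb{N}$ there is a sample $\mathcal{S}=(\mathcal{P},\mathcal{N})$ of words in $\mathcal{W}(\mathsf{Prop})$, each $w\in\mathcal{S}$ written as $w=u_w\cdot v_w^\omega$, such that $k:=\sum_{w\in\mathcal{S}}(|u_w|+|v_w|)\ge n$ and the minimal size of an $\mathcal{S}$-separating $\mathsf{L}'$-formula is larger than $2^{\sqrt{k}}$.
   Context: $\mathsf{LTL}(\mathsf{Prop})$ has operators: each proposition $q\in\mathsf{Prop}$ (arity 0), $\neg,\mathbf{X},\mathbf{F},\mathbf{G}$ (arity 1), $\vee,\wedge,\mathbf{U}$ (arity 2). A fragment is given by a subset $\mathsf{Op}'$ of these operators, its formulas being those built only from operators in $\mathsf{Op}'$. A fragment is monotone if $\neg\notin\mathsf{Op}'$ and at most one of $\vee,\wedge$ is in $\mathsf{Op}'$. $\mathsf{sz}(\varphi)$ is the number of distinct subformulas of $\varphi$. $\mathcal{W}(\mathsf{Prop})=\{u\cdot v^\omega: u,v\in(2^{\mathsf{Prop}})^*,\ u\cdot v\ne\varepsilon\}$, where for $v=\varepsilon$ the word is the finite word $u$. For a word $w$, $|w|\in\mathbb{N}\cup\{\infty\}$ is its length and $w[j:]$ its suffix from position $j$. Semantics: $w\models q$ iff $q\in w[0]$; Boolean connectives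 as usual; $w\models\mathbf{X}\varphi$ iff $|w|\ge2$ and $w[1:]\models\varphi$; $w\models\mathbf{F}\varphi$ iff $\exists j<|w|$, $w[j:]\models\varphi$; $w\models\mathbf{G}\varphi$ iff $\forall j<|w|$, $w[j:]\models\varphi$; $w\models\varphi_1\mathbf{U}\varphi_2$ iff $\exists j<|w|$ with $w[j:]\models\varphi_2$ and $w[k:]\models\varphi_1$ for all $k<j$. A formula is $\mathcal{S}$-separating if it is satisfied by every word of $\mathcal{P}$ and by no word of $\mathcal{N}$. *)

theory Defs
  imports Complex_Main
begin

datatype prop2 = P | Pbar

datatype 'p ltl =
    Atom 'p
  | Neg "'p ltl"
  | Next "'p ltl"
  | Fut "'p ltl"
  | Glob "'p ltl"
  | Or "'p ltl" "'p ltl"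
  | And "'p ltl" "'p ltl"
  | Until "'p ltl" "'p ltl"

datatype 'p ltl_op = OAtom 'p | ONeg | ONext | OFut | OGlob | OOr | OAnd | OUntil

primrec ops :: "'p ltl \<Rightarrow> 'p ltl_op set" where
  "ops (Atom q) = {OAtom q}"
| "ops (Neg f) = insert ONeg (ops f)"
| "ops (Next f) = insert ONext (ops f)"
| "ops (Fut f) = insert OFut (ops f)"
| "ops (Glob f) = insert OGlob (ops f)"
| "ops (Or f g) = insert OOr (ops f \<union> ops g)"
| "ops (And f g) = insert OAnd (ops f \<union> ops g)"
| "ops (Until f g) = insert OUntil (ops f \<union> ops g)"

definition in_fragment :: "'p ltl_op set \<Rightarrow> 'p ltl \<Rightarrow> bool" where
  "in_fragment Op' f \<longleftrightarrow> ops f \<subseteq> Op'"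

definition monotone_fragment :: "'p ltl_op set \<Rightarrow> bool" where
  "monotone_fragment Op' \<longleftrightarrow> ONeg \<notin> Op' \<and> \<not> (OOr \<in> Op' \<and> OAnd \<in> Op')"

primrec subformulas :: "'p ltl \<Rightarrow> 'p ltl set" where
  "subformulas (Atom q) = {Atom q}"
| "subformulas (Neg f) = insert (Neg f) (subformulas f)"
| "subformulas (Next f) = insert (Next f) (subformulas f)"
| "subformulas (Fut f) = insert (Fut f) (subformulas f)"
| "subformulas (Glob f) = insert (Glob f) (subformulas f)"
| "subformulas (Or f g) = insert (Or f g) (subformulas f \<union> subformulas g)"
| "subformulas (And f g) = insert (And f g) (subformulas f \<union> subformulas g)"
| "subformulas (Until f g) = insert (Until f g) (subformulas f \<union> subformulas g)"

definition sz :: "'p ltl \<Rightarrow> nat" where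
  "sz f = card (subformulas f)"

text \<open>A word u.v^omega is represented by the pair (u, v); if v = [] it is the finite word u.\<close>
type_synonym 'p word = "'p set list \<times> 'p set list"

definition valid_word :: "'p word \<Rightarrow> bool" where
  "valid_word w \<longleftrightarrow> fst w @ snd w \<noteq> []"

definition pos_ok :: "'p word \<Rightarrow> nat \<Rightarrow> bool" where
  "pos_ok w i \<longleftrightarrow> snd w \<noteq> [] \<or> i < length (fst w)"

definition letter :: "'p word \<Rightarrow> nat \<Rightarrow> 'p set" where
  "letter w i = (if i < length (fst w) then fst w ! i
                 else snd w ! ((i - length (fst w)) mod length (snd w)))"

primrec holds :: "'p word \<Rightarrow> nat \<Rightarrow> 'p ltl \<Rightarrow> bool" where
  "holds w i (Atom q) \<longleftrightarrow> q \<in> letter w i"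
| "holds w i (Neg f) \<longleftrightarrow> \<not> holds w i f"
| "holds w i (Next f) \<longleftrightarrow> pos_ok w (Suc i) \<and> holds w (Suc i) f"
| "holds w i (Fut f) \<longleftrightarrow> (\<exists>j\<ge>i. pos_ok w j \<and> holds w j f)"
| "holds w i (Glob f) \<longleftrightarrow> (\<forall>j\<ge>i. pos_ok w j \<longrightarrow> holds w j f)"
| "holds w i (Or f g) \<longleftrightarrow> holds w i f \<or> holds w i g"
| "holds w i (And f g) \<longleftrightarrow> holds w i f \<and> holds w i g"
| "holds w i (Until f g) \<longleftrightarrow>
     (\<exists>j\<ge>i. pos_ok w j \<and> holds w j g \<and> (\<forall>k. i \<le> k \<and> k < j \<longrightarrow> holds w k f))"

definition sat :: "'p word \<Rightarrow> 'p ltl \<Rightarrow> bool" where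
  "sat w f \<longleftrightarrow> holds w 0 f"

definition separating :: "'p word set \<Rightarrow> 'p word set \<Rightarrow> 'p ltl \<Rightarrow> bool" where
  "separating Pw Nw f \<longleftrightarrow> (\<forall>w\<in>Pw. sat w f) \<and> (\<forall>w\<in>Nw. \<not> sat w f)"

definition sample_size :: "'p word set \<Rightarrow> 'p word set \<Rightarrow> nat" where
  "sample_size Pw Nw =
     (\<Sum>w\<in>Pw. length (fst w) + length (snd w)) + (\<Sum>w\<in>Nw. length (fst w) + length (snd w))"

end

theory Submission
  imports Defs
begin

(* Take the periods Q = {7s..8s}. The positive words are the pulses (q {}^(i-1))^omega, i in Q,
   the negative word is q (q {})^omega; as lcm Q is even, X^(lcm Q) q separates them. Conversely,
   a formula built from X, F, G and And that holds on every pulse also holds on the negative word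
   unless its X-depth reaches lcm Q: below that depth all pulses carry q together only at offset 0,
   and F, G cannot tell a pulse of even period from the alternating word. Hence every separating
   formula has more than lcm Q >= (8s choose s) >= 2^(3s) subformulas, while the sample has size at
   most 9 s^2. Complementing all letters exchanges And with Or and F with G, which settles the
   fragments with Or. *)

(* beta_nat a r is the Beta integral B(a+1, r+1) = integral of x^a (1-x)^r over [0,1]; its
   recurrence mirrors (1-x)^(r+1) = (1-x)^r - x (1-x)^r, and unfolding it shows that any common
   multiple of a+1, ..., a+r+1 clears its denominator. *)
definition beta_nat :: "nat \<Rightarrow> nat \<Rightarrow> real" where
  "beta_nat a r = fact a * fact r / fact (a + r + 1)"

lemma beta_nat_pos: "beta_nat a r > 0"
  by (simp add: beta_nat_def)

lemma beta_nat_0_right: "beta_nat a 0 = 1 / (real a + 1)"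
  by (simp add: beta_nat_def)

lemma beta_nat_Suc_right: "beta_nat a (Suc r) = beta_nat a r - beta_nat (Suc a) r"
proof -
  define F :: real where "F = fact (a + r + 1)"
  define D :: real where "D = real a + real r + 2"
  have "F > 0" "D > 0" by (simp_all add: F_def D_def)
  have fact_sum: "fact (a + Suc r + 1) = D * F" "fact (Suc a + r + 1) = D * F"
    by (simp_all add: F_def D_def algebra_simps)
  have fact_Suc': "fact (Suc r) = (real r + 1) * fact r" "fact (Suc a) = (real a + 1) * fact a"
    by simp_all
  show ?thesis
    unfolding beta_nat_def F_def[symmetric] fact_sum fact_Suc'
    using \<open>F > 0\<close> \<open>D > 0\<close> by (simp add: field_simps) (simp add: D_def algebra_simps)
qed

lemma common_multiple_times_beta_nat_in_Ints:
  "(\<And>i. i \<in> {Suc a..Suc a + r} \<Longrightarrow> i dvd M) \<Longrightarrow> real M * beta_nat a r \<in> \<int>"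
proof (induction r arbitrary: a)
  case 0
  then obtain c where "M = Suc a * c" by fastforce
  then have "real M * beta_nat a 0 = real c"
    by (simp add: beta_nat_0_right field_simps)
  then show ?case by simp
next
  case (Suc r)
  have "real M * beta_nat a r \<in> \<int>" "real M * beta_nat (Suc a) r \<in> \<int>"
    using Suc.prems by (auto intro!: Suc.IH)
  then show ?case by (simp add: beta_nat_Suc_right right_diff_distrib)
qed

lemma binomial_le_Lcm_atLeastAtMost:
  assumes "0 < n"
  shows "n * (n + r choose r) \<le> Lcm {n..n + r}"
proof -
  obtain a where n: "n = Suc a" using assms gr0_implies_Suc by blast
  define M where "M = Lcm {n..n + r}"
  have "M \<noteq> 0" using assms by (simp add: M_def Lcm_0_iff)
  have "real M * beta_nat a r \<in> \<int>"
    by (rule common_multiple_times_beta_nat_in_Ints) (auto simp: M_def n)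
  with \<open>M \<noteq> 0\<close> beta_nat_pos have "1 \<le> real M * beta_nat a r"
    by (metis Ints_cases mult_pos_pos of_int_0_less_iff of_int_1_le_iff of_nat_0_less_iff
        gr0I int_one_le_iff_zero_less)
  moreover have "real (n * (n + r choose r)) * beta_nat a r = 1"
  proof -
    have "fact r * fact n * (n + r choose r) = (fact (n + r) :: nat)"
      using binomial_fact_lemma[of r "n + r"] by simp
    then have "fact r * (real n * fact a) * real (n + r choose r) = fact (a + r + 1)"
      unfolding n by (metis Suc_eq_plus1 add_Suc fact_Suc of_nat_fact of_nat_mult)
    then show ?thesis
      by (simp add: beta_nat_def ac_simps)
  qed
  ultimately have "real (n * (n + r choose r)) \<le> real M"
    using beta_nat_pos by (metis mult_right_le_imp_le)
  then show ?thesis unfolding M_def by linarith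
qed

lemma two_powr_sqrt_sum_le_Lcm:
  assumes "9 \<le> s"
  shows "2 powr sqrt (real (\<Sum>{7 * s..8 * s} + 3)) \<le> real (Lcm {7 * s..8 * s})"
proof -
  have "\<Sum>{7 * s..8 * s} \<le> card {7 * s..8 * s} * (8 * s)"
    using sum_bounded_above[of "{7 * s..8 * s}" "\<lambda>i. i" "8 * s"] by simp
  also have "\<dots> = 8 * (s * s) + 8 * s" by (simp add: algebra_simps)
  finally have "\<Sum>{7 * s..8 * s} + 3 \<le> 9 * (s * s)"
    using assms mult_le_mono1[OF assms, of s] by linarith
  then have "\<Sum>{7 * s..8 * s} + 3 \<le> (3 * s)\<^sup>2"
    by (simp add: power2_eq_square)
  then have "real (\<Sum>{7 * s..8 * s} + 3) \<le> (real (3 * s))\<^sup>2"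
    by (metis of_nat_le_iff of_nat_power)
  then have "sqrt (real (\<Sum>{7 * s..8 * s} + 3)) \<le> real (3 * s)"
    by (rule real_le_lsqrt[OF of_nat_0_le_iff])
  then have "2 powr sqrt (real (\<Sum>{7 * s..8 * s} + 3)) \<le> 2 powr real (3 * s)"
    by simp
  also have "\<dots> = 2 ^ (3 * s)"
    by (rule powr_realpow) simp
  also have "\<dots> = 8 ^ s"
    by (simp add: power_mult)
  also have "\<dots> \<le> real (8 * s choose s)"
    using binomial_ge_n_over_k_pow_k[of s "8 * s", where 'a = real] assms by simp
  also have "\<dots> \<le> real (7 * s * (7 * s + s choose s))"
    using assms by simp
  also have "\<dots> \<le> real (Lcm {7 * s..7 * s + s})"
    unfolding of_nat_le_iff using assms by (intro binomial_le_Lcm_atLeastAtMost) simp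
  finally show ?thesis by simp
qed

primrec next_depth :: "'p ltl \<Rightarrow> nat" where
  "next_depth (Atom q) = 0"
| "next_depth (Neg \<phi>) = next_depth \<phi>"
| "next_depth (Next \<phi>) = Suc (next_depth \<phi>)"
| "next_depth (Fut \<phi>) = next_depth \<phi>"
| "next_depth (Glob \<phi>) = next_depth \<phi>"
| "next_depth (Or \<phi> \<psi>) = max (next_depth \<phi>) (next_depth \<psi>)"
| "next_depth (And \<phi> \<psi>) = max (next_depth \<phi>) (next_depth \<psi>)"
| "next_depth (Until \<phi> \<psi>) = max (next_depth \<phi>) (next_depth \<psi>)"

lemma finite_subformulas: "finite (subformulas \<phi>)"
  by (induction \<phi>) auto

lemma size_le_of_mem_subformulas: "\<psi> \<in> subformulas \<phi> \<Longrightarrow> size \<psi> \<le> size \<phi>"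
  by (induction \<phi>) auto

lemma mem_subformulas_self: "\<phi> \<in> subformulas \<phi>"
  by (cases \<phi>) auto

lemma sz_le_of_mem_subformulas: "\<psi> \<in> subformulas \<phi> \<Longrightarrow> sz \<psi> \<le> sz \<phi>"
proof -
  assume "\<psi> \<in> subformulas \<phi>"
  then have "subformulas \<psi> \<subseteq> subformulas \<phi>"
    by (induction \<phi>) auto
  then show ?thesis
    unfolding sz_def by (rule card_mono[OF finite_subformulas])
qed

lemma next_depth_less_sz: "next_depth \<phi> < sz \<phi>"
proof (induction \<phi>)
  case (Atom q)
  then show ?case by (simp add: sz_def)
next
  case (Next \<phi>)
  have "Next \<phi> \<notin> subformulas \<phi>"
    using size_le_of_mem_subformulas by fastforce
  with Next show ?case by (simp add: sz_def finite_subformulas)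
qed (simp_all add: mem_subformulas_self order.strict_trans2[OF _ sz_le_of_mem_subformulas])

lemma holds_Next_iter:
  "snd w \<noteq> [] \<Longrightarrow> holds w i ((Next ^^ k) \<phi>) \<longleftrightarrow> holds w (i + k) \<phi>"
  by (induction k arbitrary: i) (auto simp: pos_ok_def)

lemma ops_Next_iter_Atom: "ops ((Next ^^ k) (Atom q)) \<subseteq> {ONext, OAtom q}"
  by (induction k) auto

lemma holds_mono_letters:
  assumes "snd v \<noteq> []" "snd w \<noteq> []" and "ONeg \<notin> ops \<phi>"
    and letters: "\<And>s. letter v (i + s) \<subseteq> letter w (j + s)"
  shows "holds v (i + d) \<phi> \<Longrightarrow> holds w (j + d) \<phi>"
  using assms(3)
proof (induction \<phi> arbitrary: d)
  case (Atom q)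
  then show ?case using letters[of d] by auto
next
  case (Next \<phi>)
  then show ?case using Next.IH[of "Suc d"] assms(1,2) by (simp add: pos_ok_def)
next
  case (Fut \<phi>)
  then obtain k where "i + d \<le> k" "holds v k \<phi>" by auto
  with Fut.IH[of "k - i"] Fut.prems(2) have "holds w (j + (k - i)) \<phi>" by simp
  with \<open>i + d \<le> k\<close> show ?case
    using assms(2) by (auto simp: pos_ok_def intro!: exI[of _ "j + (k - i)"])
next
  case (Glob \<phi>)
  have "holds w k \<phi>" if "j + d \<le> k" for k
    using Glob.IH[of "k - j"] Glob.prems that assms(1) by (auto simp: pos_ok_def)
  then show ?case by simp
next
  case (Until \<phi> \<psi>)
  then obtain k where k: "i + d \<le> k" "holds v k \<psi>" "\<forall>l. i + d \<le> l \<and> l < k \<longrightarrow> holds v l \<phi>"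
    by auto
  with Until.IH(2)[of "k - i"] Until.prems(2) have "holds w (j + (k - i)) \<psi>" by simp
  moreover have "holds w l \<phi>" if "j + d \<le> l" "l < j + (k - i)" for l
    using Until.IH(1)[of "l - j"] Until.prems(2) k(3) that by (auto dest: spec[of _ "i + (l - j)"])
  ultimately show ?case
    using k(1) assms(2) by (auto simp: pos_ok_def intro!: exI[of _ "j + (k - i)"])
qed auto

definition complement_word :: "'p word \<Rightarrow> 'p word" where
  "complement_word w = (map uminus (fst w), map uminus (snd w))"

lemma complement_word_complement_word [simp]: "complement_word (complement_word w) = w"
  by (simp add: complement_word_def comp_def)

lemma snd_complement_word_eq_Nil [simp]: "snd (complement_word w) = [] \<longleftrightarrow> snd w = []"
  by (simp add: complement_word_def)

lemma letter_complement_word: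
  "snd w \<noteq> [] \<Longrightarrow> letter (complement_word w) i = - letter w i"
  by (simp add: letter_def complement_word_def)

lemma sample_size_complement_word:
  "sample_size (complement_word ` Nw) (complement_word ` Pw) = sample_size Pw Nw"
proof -
  have "inj_on complement_word A" for A :: "'a word set"
    by (metis inj_onI complement_word_complement_word)
  then have "(\<Sum>w\<in>complement_word ` A. length (fst w) + length (snd w)) =
      (\<Sum>w\<in>A. length (fst w) + length (snd w))" for A :: "'a word set"
    by (subst sum.reindex) (simp_all add: complement_word_def)
  then show ?thesis
    by (simp add: sample_size_def add.commute)
qed

lemma not_until_iff:
  fixes F G :: "nat \<Rightarrow> bool"
  shows "\<not> (\<exists>j\<ge>i. G j \<and> (\<forall>k. i \<le> k \<and> k < j \<longrightarrow> F k)) \<longleftrightarrow>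
    (\<forall>j\<ge>i. \<not> G j) \<or> (\<exists>j\<ge>i. \<not> F j \<and> \<not> G j \<and> (\<forall>k. i \<le> k \<and> k < j \<longrightarrow> \<not> G k))"
    (is "\<not> ?until \<longleftrightarrow> ?release")
proof
  assume "\<not> ?until"
  show ?release
  proof (cases "\<exists>j\<ge>i. G j")
    case True
    then obtain j where j: "i \<le> j" "G j" "\<forall>k<j. \<not> (i \<le> k \<and> G k)"
      using exists_least_iff[of "\<lambda>j. i \<le> j \<and> G j"] by blast
    with \<open>\<not> ?until\<close> obtain k where "i \<le> k" "k < j" "\<not> F k" by blast
    with j show ?thesis by auto
  qed auto
next
  show "?release \<Longrightarrow> \<not> ?until"
    by (metis linorder_neqE_nat)
qed

(* Atoms stay unchanged because complement_word negates the letters; the Until clause is the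
   release expansion  not (f U g) = G (not g) or ((not g) U (not f and not g)). *)
primrec ltl_dual :: "'p ltl \<Rightarrow> 'p ltl" where
  "ltl_dual (Atom q) = Atom q"
| "ltl_dual (Neg \<phi>) = Neg (ltl_dual \<phi>)"
| "ltl_dual (Next \<phi>) = Next (ltl_dual \<phi>)"
| "ltl_dual (Fut \<phi>) = Glob (ltl_dual \<phi>)"
| "ltl_dual (Glob \<phi>) = Fut (ltl_dual \<phi>)"
| "ltl_dual (Or \<phi> \<psi>) = And (ltl_dual \<phi>) (ltl_dual \<psi>)"
| "ltl_dual (And \<phi> \<psi>) = Or (ltl_dual \<phi>) (ltl_dual \<psi>)"
| "ltl_dual (Until \<phi> \<psi>) =
     Or (Glob (ltl_dual \<psi>)) (Until (ltl_dual \<psi>) (And (ltl_dual \<phi>) (ltl_dual \<psi>)))"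

lemma holds_ltl_dual:
  assumes "snd w \<noteq> []"
  shows "holds w i (ltl_dual \<phi>) \<longleftrightarrow> \<not> holds (complement_word w) i \<phi>"
proof (induction \<phi> arbitrary: i)
  case (Until \<phi> \<psi>)
  then show ?case
    using assms not_until_iff[where F = "\<lambda>j. holds (complement_word w) j \<phi>"
        and G = "\<lambda>j. holds (complement_word w) j \<psi>"]
    by (simp add: pos_ok_def)
qed (use assms in \<open>auto simp: pos_ok_def letter_complement_word\<close>)

lemma separating_ltl_dual_iff:
  assumes "\<forall>w\<in>Pw \<union> Nw. snd w \<noteq> []"
  shows "separating Pw Nw (ltl_dual \<phi>) \<longleftrightarrow>
    separating (complement_word ` Nw) (complement_word ` Pw) \<phi>"
  using assms by (auto simp: separating_def sat_def holds_ltl_dual)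

lemma ltl_dual_Next_iter_Atom: "ltl_dual ((Next ^^ k) (Atom q)) = (Next ^^ k) (Atom q)"
  by (induction k) simp_all

lemma next_depth_ltl_dual: "next_depth (ltl_dual \<phi>) = next_depth \<phi>"
  by (induction \<phi>) simp_all

lemma in_fragment_ltl_dual:
  "in_fragment (- {ONeg, OAnd, OUntil}) \<phi> \<Longrightarrow> in_fragment (- {ONeg, OOr, OUntil}) (ltl_dual \<phi>)"
  unfolding in_fragment_def by (induction \<phi>) auto

definition pulse :: "'p \<Rightarrow> nat \<Rightarrow> 'p word" where
  "pulse q i = ([], {q} # replicate (i - 1) {})"

definition alternating :: "'p \<Rightarrow> 'p word" where
  "alternating q = ([{q}], [{q}, {}])"

lemma snd_pulse_neq_Nil [simp]: "snd (pulse q i) \<noteq> []"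
  and snd_alternating_neq_Nil [simp]: "snd (alternating q) \<noteq> []"
  by (simp_all add: pulse_def alternating_def)

lemma letter_pulse:
  assumes "0 < i"
  shows "letter (pulse q i) k = (if i dvd k then {q} else {})"
proof -
  have "k mod i < i" using assms by simp
  then have "letter (pulse q i) k = ({q} # replicate (i - 1) {}) ! (k mod i)"
    using assms by (simp add: letter_def pulse_def)
  also have "\<dots> = (if k mod i = 0 then {q} else {})"
    using \<open>k mod i < i\<close> by (simp add: nth_Cons')
  finally show ?thesis by (simp add: dvd_eq_mod_eq_0)
qed

lemma letter_alternating: "letter (alternating q) k = (if k = 0 \<or> odd k then {q} else {})"
proof (cases "k = 0")
  case False
  then have "(k - 1) mod 2 = (if odd k then 0 else 1)" by presburger
  with False show ?thesis
    by (simp add: letter_def alternating_def numeral_2_eq_2[symmetric])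
qed (simp add: letter_def alternating_def)

lemma letter_pulse_subset_alternating:
  assumes "0 < e" "even e" "odd (k + t)"
  shows "letter (pulse q e) (k + s) \<subseteq> letter (alternating q) (t + s)"
proof (cases "e dvd k + s")
  case True
  with \<open>even e\<close> have "even (k + s)" by (blast intro: dvd_trans)
  with \<open>odd (k + t)\<close> have "odd (t + s)" by presburger
  then show ?thesis by (simp add: letter_pulse[OF \<open>0 < e\<close>] letter_alternating)
qed (simp add: letter_pulse[OF \<open>0 < e\<close>])

lemma holds_pulse_imp_alternating:
  assumes "0 < e" "even e" "odd (k + t)" "ONeg \<notin> ops \<phi>" "holds (pulse q e) k \<phi>"
  shows "holds (alternating q) t \<phi>"
  using holds_mono_letters[of "pulse q e" "alternating q" \<phi> k t 0] assms(4,5)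
    letter_pulse_subset_alternating[OF assms(1-3), of q] by simp

lemma holds_Fut_pulse_imp_alternating:
  assumes "0 < e" "even e" "ONeg \<notin> ops \<phi>" "holds (pulse q e) k (Fut \<phi>)"
  shows "holds (alternating q) t (Fut \<phi>)"
proof -
  obtain k' where "k \<le> k'" "holds (pulse q e) k' \<phi>"
    using assms(4) by auto
  define t' where "t' = (if odd (k' + t) then t else Suc t)"
  have "odd (k' + t')" "t \<le> t'" by (auto simp: t'_def)
  with assms(1-3) \<open>holds (pulse q e) k' \<phi>\<close> have "holds (alternating q) t' \<phi>"
    by (intro holds_pulse_imp_alternating)
  with \<open>t \<le> t'\<close> show ?thesis by (auto simp: pos_ok_def)
qed

lemma holds_Glob_pulse_imp_alternating:
  assumes "0 < e" "even e" "ONeg \<notin> ops \<phi>" "holds (pulse q e) k (Glob \<phi>)"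
  shows "holds (alternating q) t (Glob \<phi>)"
proof -
  have "holds (alternating q) t' \<phi>" if "t \<le> t'" for t'
  proof -
    define k' where "k' = (if odd (k + t') then k else Suc k)"
    have "odd (k' + t')" "k \<le> k'" by (auto simp: k'_def)
    moreover from \<open>k \<le> k'\<close> have "holds (pulse q e) k' \<phi>"
      using assms(4) by (auto simp: pos_ok_def)
    ultimately show ?thesis
      using assms(1-3) by (intro holds_pulse_imp_alternating)
  qed
  then show ?thesis by simp
qed

(* c and t are the current positions on the pulses and on the alternating word: Next advances both,
   while F and G are decided by the pulse of even period e alone. *)
lemma holds_pulses_imp_alternating:
  assumes "0 \<notin> Q" "e \<in> Q" "even e"
    and "in_fragment (- {ONeg, OOr, OUntil}) \<phi>"
    and "\<forall>s\<le>next_depth \<phi>. Lcm Q dvd c + s \<longrightarrow> q \<in> letter (alternating q) (t + s)"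
    and "\<forall>i\<in>Q. holds (pulse q i) c \<phi>"
  shows "holds (alternating q) t \<phi>"
  using assms(4-)
proof (induction \<phi> arbitrary: c t)
  case (Atom r)
  have pos: "0 < i" if "i \<in> Q" for i
    using assms(1) that by (auto intro: gr0I)
  then have "r = q" "\<forall>i\<in>Q. i dvd c"
    using Atom.prems(3) assms(2) by (auto simp: letter_pulse split: if_splits)
  then show ?case
    using Atom.prems(2) by (auto intro: Lcm_least)
next
  case (Next \<phi>)
  have "holds (alternating q) (Suc t) \<phi>"
  proof (rule Next.IH)
    show "\<forall>s\<le>next_depth \<phi>. Lcm Q dvd Suc c + s \<longrightarrow> q \<in> letter (alternating q) (Suc t + s)"
      using Next.prems(2) by fastforce
  qed (use Next.prems in \<open>auto simp: in_fragment_def pos_ok_def\<close>)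
  then show ?case by (simp add: pos_ok_def)
next
  case (Fut \<phi>)
  with assms show ?case
    by (intro holds_Fut_pulse_imp_alternating[of e]) (auto simp: in_fragment_def intro: gr0I)
next
  case (Glob \<phi>)
  with assms show ?case
    by (intro holds_Glob_pulse_imp_alternating[of e]) (auto simp: in_fragment_def intro: gr0I)
next
  case (And \<phi> \<psi>)
  then show ?case
    using And.IH[of c t] by (auto simp: in_fragment_def)
qed (auto simp: in_fragment_def)

lemma sample_size_pulse_sample:
  assumes "0 \<notin> Q"
  shows "sample_size (pulse q ` Q) {alternating q} = \<Sum>Q + 3"
proof -
  have length_pulse: "length (fst (pulse q i)) + length (snd (pulse q i)) = i" if "i \<in> Q" for i
    using assms that by (cases i) (auto simp: pulse_def)
  then have "inj_on (pulse q) Q"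
    by (metis inj_onI)
  with length_pulse show ?thesis
    by (simp add: sample_size_def sum.reindex alternating_def)
qed

lemma pulse_sample_separated:
  assumes "finite Q" "0 \<notin> Q" "e \<in> Q" "even e"
  shows "separating (pulse q ` Q) {alternating q} ((Next ^^ Lcm Q) (Atom q))"
proof -
  have "Lcm Q \<noteq> 0" using assms(1,2) by (simp add: Lcm_0_iff)
  moreover have "even (Lcm Q)" using assms(3,4) by (meson dvd_Lcm dvd_trans)
  moreover have "0 < i" if "i \<in> Q" for i using assms(2) that by (auto intro: gr0I)
  ultimately show ?thesis
    by (auto simp: separating_def sat_def holds_Next_iter letter_pulse letter_alternating dvd_Lcm)
qed

lemma next_depth_ge_of_separating_pulse_sample:
  assumes "0 \<notin> Q" "e \<in> Q" "even e"
    and "in_fragment (- {ONeg, OOr, OUntil}) \<phi>" "separating (pulse q ` Q) {alternating q} \<phi>"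
  shows "Lcm Q \<le> next_depth \<phi>"
proof (rule ccontr)
  assume "\<not> Lcm Q \<le> next_depth \<phi>"
  then have "\<forall>s\<le>next_depth \<phi>. Lcm Q dvd 0 + s \<longrightarrow> q \<in> letter (alternating q) (0 + s)"
    by (auto simp: letter_alternating dest: dvd_imp_le)
  then have "holds (alternating q) 0 \<phi>"
    using assms by (intro holds_pulses_imp_alternating[of Q e]) (auto simp: separating_def sat_def)
  with assms(5) show False by (simp add: separating_def sat_def)
qed

lemma complement_pulse_sample_separated:
  assumes "finite Q" "0 \<notin> Q" "e \<in> Q" "even e"
  shows "separating (complement_word ` {alternating q}) (complement_word ` pulse q ` Q)
    ((Next ^^ Lcm Q) (Atom q))"
  using pulse_sample_separated[OF assms, of q]
    separating_ltl_dual_iff[of "pulse q ` Q" "{alternating q}" "(Next ^^ Lcm Q) (Atom q)"]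
  unfolding ltl_dual_Next_iter_Atom by simp

lemma next_depth_ge_of_separating_complement_pulse_sample:
  assumes "0 \<notin> Q" "e \<in> Q" "even e" and "in_fragment (- {ONeg, OAnd, OUntil}) \<phi>"
    and "separating (complement_word ` {alternating q}) (complement_word ` pulse q ` Q) \<phi>"
  shows "Lcm Q \<le> next_depth \<phi>"
proof -
  have "separating (pulse q ` Q) {alternating q} (ltl_dual \<phi>)"
    using assms(5) separating_ltl_dual_iff[of "pulse q ` Q" "{alternating q}" \<phi>] by simp
  with assms(1-4) have "Lcm Q \<le> next_depth (ltl_dual \<phi>)"
    by (intro next_depth_ge_of_separating_pulse_sample in_fragment_ltl_dual)
  then show ?thesis by (simp add: next_depth_ltl_dual)
qed

lemma monotone_fragment_pulse_sample:
  assumes "monotone_fragment Op'" "OUntil \<notin> Op'"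
    and "finite Q" "0 \<notin> Q" "e \<in> Q" "even e"
  obtains Pw Nw :: "'p word set"
  where "finite Pw" "finite Nw" "\<forall>w\<in>Pw \<union> Nw. snd w \<noteq> []"
    and "sample_size Pw Nw = \<Sum>Q + 3" and "separating Pw Nw ((Next ^^ Lcm Q) (Atom q))"
    and "\<And>f. in_fragment Op' f \<Longrightarrow> separating Pw Nw f \<Longrightarrow> Lcm Q \<le> next_depth f"
proof -
  have "Op' \<subseteq> - {ONeg, OOr, OUntil} \<or> Op' \<subseteq> - {ONeg, OAnd, OUntil}"
    using assms(1,2) by (auto simp: monotone_fragment_def)
  then show thesis
  proof
    assume "Op' \<subseteq> - {ONeg, OOr, OUntil}"
    then show thesis
      using assms(3-) next_depth_ge_of_separating_pulse_sample[OF assms(4-6), of _ q]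
      by (intro that[of "pulse q ` Q" "{alternating q}"])
        (auto simp: in_fragment_def sample_size_pulse_sample intro: pulse_sample_separated)
  next
    assume "Op' \<subseteq> - {ONeg, OAnd, OUntil}"
    then show thesis
      using assms(3-) next_depth_ge_of_separating_complement_pulse_sample[OF assms(4-6), of _ q]
        complement_pulse_sample_separated[OF assms(3-6), of q]
      by (intro that[of "complement_word ` {alternating q}" "complement_word ` pulse q ` Q"])
        (auto simp: in_fragment_def sample_size_complement_word sample_size_pulse_sample
          simp del: image_insert image_empty)
  qed
qed

theorem proposition4:
  fixes Op' :: "prop2 ltl_op set" and n :: nat
  assumes "monotone_fragment Op'"
    and "ONext \<in> Op'" and "OUntil \<notin> Op'"
    and "\<exists>q. OAtom q \<in> Op'"
  shows "\<exists>Pw Nw :: prop2 word set.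
           finite Pw \<and> finite Nw \<and>
           (\<forall>w\<in>Pw \<union> Nw. valid_word w) \<and>
           sample_size Pw Nw \<ge> n \<and>
           (\<exists>f. in_fragment Op' f \<and> separating Pw Nw f) \<and>
           (\<forall>f. in_fragment Op' f \<and> separating Pw Nw f \<longrightarrow>
                real (sz f) > 2 powr sqrt (real (sample_size Pw Nw)))"
proof -
  obtain q where q: "OAtom q \<in> Op'" using assms(4) by blast
  define s where "s = n + 9"
  define Q where "Q = {7 * s..8 * s}"
  have "finite Q" "0 \<notin> Q" "8 * s \<in> Q" "even (8 * s)"
    by (auto simp: Q_def s_def)
  with assms(1,3) obtain Pw Nw :: "prop2 word set"
    where Pw_Nw: "finite Pw" "finite Nw" "\<forall>w\<in>Pw \<union> Nw. snd w \<noteq> []"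
      and size: "sample_size Pw Nw = \<Sum>Q + 3"
      and sep: "separating Pw Nw ((Next ^^ Lcm Q) (Atom q))"
      and lower: "\<And>f. in_fragment Op' f \<Longrightarrow> separating Pw Nw f \<Longrightarrow> Lcm Q \<le> next_depth f"
    by (blast intro: monotone_fragment_pulse_sample[where q = q])
  have "in_fragment Op' ((Next ^^ Lcm Q) (Atom q))"
    using ops_Next_iter_Atom[of "Lcm Q" q] assms(2) q by (auto simp: in_fragment_def)
  moreover have "n \<le> sample_size Pw Nw"
    unfolding size using \<open>finite Q\<close>
    by (intro trans_le_add1 order_trans[OF _ member_le_sum[of "7 * s"]]) (auto simp: Q_def s_def)
  moreover have "2 powr sqrt (real (sample_size Pw Nw)) < real (sz f)"
    if "in_fragment Op' f \<and> separating Pw Nw f" for f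
  proof -
    have "2 powr sqrt (real (sample_size Pw Nw)) \<le> real (Lcm Q)"
      unfolding size Q_def by (rule two_powr_sqrt_sum_le_Lcm) (simp add: s_def)
    also have "Lcm Q < sz f"
      using that next_depth_less_sz[of f] lower by (meson le_less_trans)
    finally show ?thesis by simp
  qed
  ultimately show ?thesis
    using Pw_Nw sep by (intro exI[of _ Pw] exI[of _ Nw]) (auto simp: valid_word_def)
qed

end
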